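(* Let $n=2m$ be even and $1\le i\le m-1$. Let \[ \psi_{2i+1,1}=\sum_{\substack{I\subseteq\{1,\dots,n\},\ |I|=m-i-1\\ j\in\{1,\dots,n\}}}e_I\wedge f_I\wedge f_j\otimes e_j\ \in\ \wedge^{n-2i-1}V\otimes\Delta_- . \] Then the projection of $\psi_{2i+1,1}$ onto the Cartan component $V_{\omega_{n-1}+\omega_{n-2i-1}}\subset\wedge^{n-2i-1}V\otimes\Delta_-$ is zero.
   Context: Let $V$ be a complex vector space of dimension $2n$ with a nondegenerate symmetric bilinear form $q$, $V=E\oplus F$ with $E,F$ maximal isotropic, bases $e_1,\dots,e_n$ of $E$ and $f_1,\dots,f_n$ of $F$ with $q(e_i,f_j)=\delta_{ij}$. For $I=\{i_1<\dots<i_k\}$, $e_I=e_{i_1}\wedge\cdots\wedge e_{i_k}$ and $f_I=f_{i_1}\wedge\cdots\wedge f_{i_k}$. $\mathrm{Spin}(V)$ is of type $D_n$ with fundamental weights $\omega_1,\dots,\omega_n$ (Bourbaki), $\omega_0:=0$; $V_\lambda$ denotes the irreducible module of highest weight $\lambda$; $\wedge^kV=V_{\omega_k}$ for $k\le n-2$. For $n$ even, $\Delta_+=\wedge^{\mathrm{even}}E=V_{\omega_n}$ and $\Delta_-=\wedge^{\mathrm{odd}}E=V_{\omega_{n-1}}$ (half-spin representations, with the $Cl(V)$-module structure on $\wedge E$ in which $v=v'+v''\in E\oplus F$ acts by $o(v')+2i(v'')$). The Cartan component of $V_\lambda\otimes V_\mu$ is the unique irreducible submodule of highest weight $\lambda+\mu$.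 *)

theory Defs
  imports Main "HOL.Complex"
begin

text \<open>Concrete model.  n = dim E.  Basis of V is indexed by 1..2n:
  index a (1 \<le> a \<le> n) is e_a, index n+a is f_a.  An element of the exterior
  algebra over an ordered basis is a coefficient function on finite sets of indices:
  alpha S is the coefficient of e_S = e_{s1} wedge ... wedge e_{sk} (s1 < ... < sk).
  The half-spin module Delta_- = wedge^odd E uses indices 1..n.
  Elements of wedge^k V tensor Delta_- are functions on pairs (S,T):
  the coefficient of e_S tensor e_T.\<close>

definition sgnb :: "nat \<Rightarrow> nat set \<Rightarrow> complex" where
  "sgnb c A = (-1) ^ card {a\<in>A. a < c}"

definition ext :: "nat \<Rightarrow> (nat set \<Rightarrow> complex) \<Rightarrow> (nat set \<Rightarrow> complex)" where
  "ext c \<alpha> = (\<lambda>S. if c \<in> S then sgnb c (S - {c}) * \<alpha> (S - {c}) else 0)"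

definition ctr :: "nat \<Rightarrow> (nat set \<Rightarrow> complex) \<Rightarrow> (nat set \<Rightarrow> complex)" where
  "ctr c \<alpha> = (\<lambda>S. if c \<notin> S then sgnb c S * \<alpha> (insert c S) else 0)"

text \<open>q-partner index: q(e_a,f_a) = 1\<close>
definition pt :: "nat \<Rightarrow> nat \<Rightarrow> nat" where
  "pt n a = (if a \<le> n then a + n else a - n)"

text \<open>Element X_{a,b} of so(V): v |-> q(b,v) a - q(a,v) b (for basis vectors a, b);
  these span so(V).  Its (derivation) action on wedge V:\<close>
definition rhoV :: "nat \<Rightarrow> nat \<Rightarrow> nat \<Rightarrow> (nat set \<Rightarrow> complex) \<Rightarrow> (nat set \<Rightarrow> complex)" where
  "rhoV n a b \<alpha> = (\<lambda>S. ext a (ctr (pt n b) \<alpha>) S - ext b (ctr (pt n a) \<alpha>) S)"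

text \<open>Clifford action on wedge E: e_c acts by exterior multiplication, f_c by 2 times
  contraction (v = v' + v'' acts by o(v') + 2 i(v''))\<close>
definition clif :: "nat \<Rightarrow> nat \<Rightarrow> (nat set \<Rightarrow> complex) \<Rightarrow> (nat set \<Rightarrow> complex)" where
  "clif n c \<beta> = (if c \<le> n then ext c \<beta> else (\<lambda>T. 2 * ctr (c - n) \<beta> T))"

definition rhoS :: "nat \<Rightarrow> nat \<Rightarrow> nat \<Rightarrow> (nat set \<Rightarrow> complex) \<Rightarrow> (nat set \<Rightarrow> complex)" where
  "rhoS n a b \<beta> = (\<lambda>T. (clif n a (clif n b \<beta>) T - clif n b (clif n a \<beta>) T) / 4)"

definition act :: "nat \<Rightarrow> nat \<Rightarrow> nat \<Rightarrow> (nat set \<times> nat set \<Rightarrow> complex) \<Rightarrow> (nat set \<times> nat set \<Rightarrow> complex)" where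
  "act n a b w = (\<lambda>(S,T). rhoV n a b (\<lambda>S'. w (S',T)) S + rhoS n a b (\<lambda>T'. w (S,T')) T)"

definition Wmod :: "nat \<Rightarrow> nat \<Rightarrow> (nat set \<times> nat set \<Rightarrow> complex) set" where
  "Wmod n k = {w. \<forall>S T. w (S,T) \<noteq> 0 \<longrightarrow>
       S \<subseteq> {1..2*n} \<and> card S = k \<and> T \<subseteq> {1..n} \<and> odd (card T)}"

definition subsp :: "('x \<Rightarrow> complex) set \<Rightarrow> bool" where
  "subsp C \<longleftrightarrow> (\<lambda>_. 0) \<in> C \<and> (\<forall>x\<in>C. \<forall>y\<in>C. (\<lambda>z. x z + y z) \<in> C)
               \<and> (\<forall>c. \<forall>x\<in>C. (\<lambda>z. c * x z) \<in> C)"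

definition invariant :: "nat \<Rightarrow> (nat set \<times> nat set \<Rightarrow> complex) set \<Rightarrow> bool" where
  "invariant n C \<longleftrightarrow> (\<forall>a\<in>{1..2*n}. \<forall>b\<in>{1..2*n}. \<forall>x\<in>C. act n a b x \<in> C)"

text \<open>Fundamental weights of D_n (Bourbaki) in epsilon-coordinates,
  epsilon_j being the weight of e_j; omega_0 = 0.\<close>
definition omegaD :: "nat \<Rightarrow> nat \<Rightarrow> nat \<Rightarrow> complex" where
  "omegaD n k j = (if k \<le> n - 2 then (if j \<le> k then 1 else 0)
                   else if k = n - 1 then (if j < n then 1/2 else -1/2)
                   else 1/2)"

text \<open>highest weight vector of weight lam: a nonzero weight vector (Cartan subalgebra
  spanned by H_j = X_{e_j,f_j}) annihilated by all positive root vectors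
  X_{e_a,f_b}, X_{e_a,e_b} (a < b).\<close>
definition hw_vector :: "nat \<Rightarrow> (nat \<Rightarrow> complex) \<Rightarrow> (nat set \<times> nat set \<Rightarrow> complex) \<Rightarrow> bool" where
  "hw_vector n lam v \<longleftrightarrow> v \<noteq> (\<lambda>_. 0)
     \<and> (\<forall>j\<in>{1..n}. act n j (n + j) v = (\<lambda>z. lam j * v z))
     \<and> (\<forall>a\<in>{1..n}. \<forall>b\<in>{1..n}. a < b \<longrightarrow>
           act n a (n + b) v = (\<lambda>_. 0) \<and> act n a b v = (\<lambda>_. 0))"

definition irred_hw_submodule :: "nat \<Rightarrow> nat \<Rightarrow> (nat \<Rightarrow> complex) \<Rightarrow> (nat set \<times> nat set \<Rightarrow> complex) set \<Rightarrow> bool" where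
  "irred_hw_submodule n k lam C \<longleftrightarrow> C \<subseteq> Wmod n k \<and> subsp C \<and> invariant n C
     \<and> C \<noteq> {\<lambda>_. 0}
     \<and> (\<forall>D. subsp D \<and> D \<subseteq> C \<and> invariant n D \<longrightarrow> D = {\<lambda>_. 0} \<or> D = C)
     \<and> (\<exists>v\<in>C. hw_vector n lam v)"

text \<open>Cartan component of wedge^k V tensor Delta_- = V_{omega_k} tensor V_{omega_{n-1}}\<close>
definition cartan_component :: "nat \<Rightarrow> nat \<Rightarrow> (nat set \<times> nat set \<Rightarrow> complex) set \<Rightarrow> bool" where
  "cartan_component n k C \<longleftrightarrow>
     irred_hw_submodule n k (\<lambda>j. omegaD n (n - 1) j + omegaD n k j) C"

definition equiv_proj :: "nat \<Rightarrow> nat \<Rightarrow> (nat set \<times> nat set \<Rightarrow> complex) set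
     \<Rightarrow> ((nat set \<times> nat set \<Rightarrow> complex) \<Rightarrow> (nat set \<times> nat set \<Rightarrow> complex)) \<Rightarrow> bool" where
  "equiv_proj n k C p \<longleftrightarrow>
     (\<forall>x\<in>Wmod n k. \<forall>y\<in>Wmod n k. \<forall>c.
         p (\<lambda>z. x z + y z) = (\<lambda>z. p x z + p y z) \<and> p (\<lambda>z. c * x z) = (\<lambda>z. c * p x z))
     \<and> (\<forall>x\<in>Wmod n k. p x \<in> C) \<and> (\<forall>x\<in>C. p x = x)
     \<and> (\<forall>a\<in>{1..2*n}. \<forall>b\<in>{1..2*n}. \<forall>x\<in>Wmod n k. p (act n a b x) = act n a b (p x))"

definition wedge_list :: "nat list \<Rightarrow> (nat set \<Rightarrow> complex)" where
  "wedge_list xs = foldr ext xs (\<lambda>S. if S = {} then 1 else 0)"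

definition psi :: "nat \<Rightarrow> nat \<Rightarrow> nat \<Rightarrow> (nat set \<times> nat set \<Rightarrow> complex)" where
  "psi n m i = (\<lambda>(S,T). \<Sum>I\<in>{I. I \<subseteq> {1..n} \<and> card I = m - i - 1}. \<Sum>j\<in>{1..n}.
      wedge_list (sorted_list_of_set I @ map (\<lambda>x. x + n) (sorted_list_of_set I) @ [n + j]) S
      * (if T = {j} then 1 else 0))"

end

theory Submission
  imports Defs
begin

(* Write r = 2(m-i-1) and K = n-2i-1 = r+1.  The vector psi is the image of
   phi = omega (x) 1, with omega = sum_I e_I /\ f_I, under the map
     E = sum_c e_c (x) gamma(f_c) : wedge^r V (x) wedge^even E --> wedge^K V (x) wedge^odd E,
   i.e. multiplication by the invariant tensor of q (f_c denoting the q-dual basis vector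
   of e_c and gamma the Clifford action).
   E commutes with the action of so(V); hence for the equivariant projection p onto the
   Cartan component C, the image D = p(E(wedge^r V (x) wedge^even E)) is a submodule of C,
   and by irreducibility D = 0 or D = C.  The second case is impossible: the Cartan element
   H = H_1 + ... + H_K acts diagonally on the source with eigenvalues at most r + K/2, whereas
   a highest weight vector of C has H-eigenvalue 3K/2 > r + K/2.  A polynomial in H vanishing
   at all source eigenvalues kills the source, hence (by equivariance of p and E) kills the
   highest weight vector, which is absurd.  So D = 0 and p(psi) = 0. *)

lemma sgnb_sq[simp]: "sgnb c A * sgnb c A = 1"
  unfolding sgnb_def by (simp add: power_mult_distrib[symmetric] flip: power_add mult_2)

lemma finite_below: "finite {a\<in>A. a < (c::nat)}"
  by (rule finite_subset[of _ "{..<c}"]) auto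

lemma sgnb_insert: "x \<notin> A \<Longrightarrow> sgnb c (insert x A) = (if x < c then - sgnb c A else sgnb c A)"
proof -
  assume x: "x \<notin> A"
  show ?thesis
  proof (cases "x < c")
    case True
    have "{a\<in>insert x A. a < c} = insert x {a\<in>A. a < c}" using True by auto
    then show ?thesis using True x finite_below[of A c] by (simp add: sgnb_def)
  next
    case False
    have "{a\<in>insert x A. a < c} = {a\<in>A. a < c}" using False by auto
    then show ?thesis using False by (simp add: sgnb_def)
  qed
qed

lemma sgnb_remove: "x \<in> A \<Longrightarrow> sgnb c A = (if x < c then - sgnb c (A - {x}) else sgnb c (A - {x}))"
  using sgnb_insert[of x "A - {x}" c] by (simp add: insert_absorb)

lemma ext_anticomm: "ext a (ext b \<alpha>) S = - ext b (ext a \<alpha>) S"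
proof (cases "a = b")
  case True then show ?thesis by (simp add: ext_def)
next
  case False
  show ?thesis
  proof (cases "a \<in> S \<and> b \<in> S")
    case True
    have e: "S - {a} - {b} = S - {b} - {a}" by auto
    have s1: "sgnb a (S - {a}) = (if b < a then - sgnb a (S - {b} - {a}) else sgnb a (S - {b} - {a}))"
      using sgnb_remove[of b "S - {a}" a] True False e by auto
    have s2: "sgnb b (S - {b}) = (if a < b then - sgnb b (S - {a} - {b}) else sgnb b (S - {a} - {b}))"
      using sgnb_remove[of a "S - {b}" b] True False e by auto
    show ?thesis using True False s1 s2 e by (auto simp: ext_def)
  next
    case False then show ?thesis by (auto simp: ext_def)
  qed
qed

lemma ctr_anticomm: "ctr a (ctr b \<alpha>) S = - ctr b (ctr a \<alpha>) S"
proof (cases "a = b")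
  case True then show ?thesis by (simp add: ctr_def)
next
  case False
  show ?thesis
  proof (cases "a \<notin> S \<and> b \<notin> S")
    case True
    have e: "insert b (insert a S) = insert a (insert b S)" by auto
    have s1: "sgnb a (insert b S) = (if b < a then - sgnb a S else sgnb a S)"
      using sgnb_insert[of b S a] True by auto
    have s2: "sgnb b (insert a S) = (if a < b then - sgnb b S else sgnb b S)"
      using sgnb_insert[of a S b] True by auto
    show ?thesis using True False s1 s2 e by (auto simp: ctr_def)
  next
    case False then show ?thesis by (auto simp: ctr_def)
  qed
qed

lemma ctr_ext_anticomm: "ctr a (ext b \<alpha>) S + ext b (ctr a \<alpha>) S = (if a = b then \<alpha> S else 0)"
proof (cases "a = b")
  case True
  then show ?thesis by (cases "a \<in> S") (auto simp: ext_def ctr_def insert_absorb)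
next
  case False
  show ?thesis
  proof (cases "a \<notin> S \<and> b \<in> S")
    case True
    have e: "insert a S - {b} = insert a (S - {b})" using False by auto
    have s1: "sgnb a S = (if b < a then - sgnb a (S - {b}) else sgnb a (S - {b}))"
      using sgnb_remove[of b S a] True by auto
    have s2: "sgnb b (insert a S - {b}) = (if a < b then - sgnb b (S - {b}) else sgnb b (S - {b}))"
      using sgnb_insert[of a "S - {b}" b] True e by auto
    show ?thesis using True False s1 s2 e by (auto simp: ext_def ctr_def)
  next
    case F2: False then show ?thesis using False by (auto simp: ext_def ctr_def)
  qed
qed

definition lin :: "(('x \<Rightarrow> complex) \<Rightarrow> ('y \<Rightarrow> complex)) \<Rightarrow> bool" where
  "lin A \<longleftrightarrow> (\<forall>f g a b. A (\<lambda>x. a * f x + b * g x) = (\<lambda>x. a * A f x + b * A g x))"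

lemma lin_zero: "lin A \<Longrightarrow> A (\<lambda>x. 0) = (\<lambda>x. 0)"
  unfolding lin_def by (drule spec[of _ "\<lambda>x. 0"], drule spec[of _ "\<lambda>x. 0"], drule spec[of _ 0], drule spec[of _ 0]) simp

lemma lin_add: "lin A \<Longrightarrow> A (\<lambda>x. f x + g x) = (\<lambda>x. A f x + A g x)"
  unfolding lin_def by (drule spec[of _ f], drule spec[of _ g], drule spec[of _ 1], drule spec[of _ 1]) simp

lemma lin_diff: "lin A \<Longrightarrow> A (\<lambda>x. f x - g x) = (\<lambda>x. A f x - A g x)"
  unfolding lin_def by (drule spec[of _ f], drule spec[of _ g], drule spec[of _ 1], drule spec[of _ "-1"]) simp

lemma lin_scal: "lin A \<Longrightarrow> A (\<lambda>x. c * f x) = (\<lambda>x. c * A f x)"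
  unfolding lin_def by (drule spec[of _ f], drule spec[of _ f], drule spec[of _ c], drule spec[of _ 0]) simp

lemma lin_div: "lin A \<Longrightarrow> A (\<lambda>x. f x / c) = (\<lambda>x. A f x / c)"
  using lin_scal[of A "1/c" f] by simp

lemma lin_if: "lin A \<Longrightarrow> A (\<lambda>x. if P then f x else 0) = (\<lambda>x. if P then A f x else 0)"
  by (cases P) (auto simp: lin_zero)

lemma lin_sum: "lin A \<Longrightarrow> A (\<lambda>x. \<Sum>i\<in>I. f i x) = (\<lambda>x. \<Sum>i\<in>I. A (f i) x)"
proof (induction I rule: infinite_finite_induct)
  case (infinite A) then show ?case by (simp add: lin_zero)
next
  case empty then show ?case by (simp add: lin_zero)
next
  case (insert i I)
  have "A (\<lambda>x. f i x + (\<Sum>i\<in>I. f i x)) = (\<lambda>x. A (f i) x + A (\<lambda>x. \<Sum>i\<in>I. f i x) x)"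
    by (rule lin_add[OF insert.prems])
  then show ?case using insert by simp
qed

lemma lin_comp: "lin A \<Longrightarrow> lin B \<Longrightarrow> lin (\<lambda>f. A (B f))"
  unfolding lin_def by simp

lemma lin_ext: "lin (ext c)" unfolding lin_def by (auto simp: ext_def fun_eq_iff algebra_simps)
lemma lin_ctr: "lin (ctr c)" unfolding lin_def by (auto simp: ctr_def fun_eq_iff algebra_simps)
lemma lin_clif: "lin (clif n c)" unfolding lin_def clif_def by (auto simp: ext_def ctr_def fun_eq_iff algebra_simps)
lemma lin_rhoV: "lin (rhoV n a b)"
  unfolding lin_def rhoV_def by (simp add: lin_add[OF lin_ext] lin_add[OF lin_ctr] lin_scal[OF lin_ext] lin_scal[OF lin_ctr] algebra_simps)
lemma lin_rhoS: "lin (rhoS n a b)"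
  unfolding lin_def rhoS_def by (simp add: lin_add[OF lin_clif] lin_scal[OF lin_clif] algebra_simps diff_divide_distrib add_divide_distrib)

lemmas ext_lin = lin_add[OF lin_ext] lin_diff[OF lin_ext] lin_scal[OF lin_ext] lin_zero[OF lin_ext] lin_sum[OF lin_ext]
lemmas ctr_lin = lin_add[OF lin_ctr] lin_diff[OF lin_ctr] lin_scal[OF lin_ctr] lin_zero[OF lin_ctr] lin_sum[OF lin_ctr]
lemmas clif_lin = lin_div[OF lin_clif] lin_add[OF lin_clif] lin_diff[OF lin_clif] lin_scal[OF lin_clif] lin_zero[OF lin_clif] lin_sum[OF lin_clif]

lemma ext_if: "ext a (\<lambda>S. if P then \<alpha> S else 0) = (\<lambda>S. if P then ext a \<alpha> S else 0)"
  by (auto simp: ext_def fun_eq_iff)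

lemma clif_if: "clif n a (\<lambda>S. if P then c * \<alpha> S else 0) = (\<lambda>S. if P then c * clif n a \<alpha> S else 0)"
  by (auto simp: clif_def ext_def ctr_def fun_eq_iff)

lemma ctr_ext_swap: "ctr a (ext b \<alpha>) = (\<lambda>S. (if a = b then \<alpha> S else 0) - ext b (ctr a \<alpha>) S)"
  using ctr_ext_anticomm[of a b \<alpha>] by (auto simp: fun_eq_iff algebra_simps)

lemma rhoV_ext_commute: "rhoV n a b (ext c \<alpha>) S = ext c (rhoV n a b \<alpha>) S
   + (if c = pt n b then ext a \<alpha> S else 0) - (if c = pt n a then ext b \<alpha> S else 0)"
proof -
  have "rhoV n a b (ext c \<alpha>) S = ext a (ctr (pt n b) (ext c \<alpha>)) S - ext b (ctr (pt n a) (ext c \<alpha>)) S"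
    by (simp add: rhoV_def)
  also have "ext a (ctr (pt n b) (ext c \<alpha>)) S = (if c = pt n b then ext a \<alpha> S else 0) + ext c (ext a (ctr (pt n b) \<alpha>)) S"
    unfolding ctr_ext_swap by (auto simp: ext_lin ext_if ext_anticomm[of a c])
  also have "ext b (ctr (pt n a) (ext c \<alpha>)) S = (if c = pt n a then ext b \<alpha> S else 0) + ext c (ext b (ctr (pt n a) \<alpha>)) S"
    unfolding ctr_ext_swap by (auto simp: ext_lin ext_if ext_anticomm[of b c])
  finally show ?thesis by (simp add: rhoV_def ext_lin)
qed

lemma pt_range: "a \<in> {1..2*n} \<Longrightarrow> pt n a \<in> {1..2*n}" by (auto simp: pt_def)
lemma pt_pt: "a \<in> {1..2*n} \<Longrightarrow> pt n (pt n a) = a" by (auto simp: pt_def)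

lemma clif_anticomm: assumes "a \<in> {1..2*n}" "b \<in> {1..2*n}"
  shows "clif n a (clif n b \<beta>) T + clif n b (clif n a \<beta>) T = (if b = pt n a then 2 * \<beta> T else 0)"
proof (cases "a \<le> n")
  case a: True
  show ?thesis
  proof (cases "b \<le> n")
    case True
    then show ?thesis using a assms ext_anticomm[of a b \<beta> T] by (auto simp: clif_def pt_def)
  next
    case False
    have "clif n a (clif n b \<beta>) T + clif n b (clif n a \<beta>) T
        = 2 * (ctr (b - n) (ext a \<beta>) T + ext a (ctr (b - n) \<beta>) T)"
      using a False by (simp add: clif_def ext_lin algebra_simps)
    also have "\<dots> = (if b = pt n a then 2 * \<beta> T else 0)"
      using ctr_ext_anticomm[of "b-n" a \<beta> T] a False by (auto simp: pt_def)
    finally show ?thesis .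
  qed
next
  case a: False
  show ?thesis
  proof (cases "b \<le> n")
    case True
    have "clif n a (clif n b \<beta>) T + clif n b (clif n a \<beta>) T
        = 2 * (ctr (a - n) (ext b \<beta>) T + ext b (ctr (a - n) \<beta>) T)"
      using a True by (simp add: clif_def ext_lin algebra_simps)
    also have "\<dots> = (if b = pt n a then 2 * \<beta> T else 0)"
      using ctr_ext_anticomm[of "a-n" b \<beta> T] a True assms by (auto simp: pt_def)
    finally show ?thesis .
  next
    case False
    have "clif n a (clif n b \<beta>) T + clif n b (clif n a \<beta>) T
        = 4 * (ctr (a - n) (ctr (b - n) \<beta>) T + ctr (b - n) (ctr (a - n) \<beta>) T)"
      using a False by (simp add: clif_def ctr_lin algebra_simps)
    also have "\<dots> = (if b = pt n a then 2 * \<beta> T else 0)"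
      using ctr_anticomm[of "a-n" "b-n" \<beta> T] a False assms by (auto simp: pt_def)
    finally show ?thesis .
  qed
qed

lemma clif_anticomm_swap: assumes "a \<in> {1..2*n}" "b \<in> {1..2*n}"
  shows "clif n a (clif n b \<beta>) = (\<lambda>T. (if b = pt n a then 2 * \<beta> T else 0) - clif n b (clif n a \<beta>) T)"
  using clif_anticomm[OF assms, of \<beta>] by (auto simp: fun_eq_iff algebra_simps)

lemma rhoS_alt: "rhoS n a b \<beta> = (\<lambda>T. (1/4) * (clif n a (clif n b \<beta>) T - clif n b (clif n a \<beta>) T))"
  by (simp add: rhoS_def)

lemma rhoS_clif_commute: assumes "a \<in> {1..2*n}" "b \<in> {1..2*n}" "u \<in> {1..2*n}"
  shows "rhoS n a b (clif n u \<beta>) T = clif n u (rhoS n a b \<beta>) T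
   + (if u = pt n b then clif n a \<beta> T else 0) - (if u = pt n a then clif n b \<beta> T else 0)"
proof -
  have 1: "clif n a (clif n b (clif n u \<beta>)) T = 2 * (if u = pt n b then clif n a \<beta> T else 0)
     - 2 * (if u = pt n a then clif n b \<beta> T else 0) + clif n u (clif n a (clif n b \<beta>)) T"
  proof -
    have "clif n a (clif n b (clif n u \<beta>)) T = clif n a (\<lambda>T. (if u = pt n b then 2 * \<beta> T else 0) - clif n u (clif n b \<beta>) T) T"
      by (simp only: clif_anticomm_swap[OF assms(2,3)])
    also have "\<dots> = 2 * (if u = pt n b then clif n a \<beta> T else 0) - clif n a (clif n u (clif n b \<beta>)) T"
      by (simp add: clif_lin clif_if)
    also have "clif n a (clif n u (clif n b \<beta>)) T = (if u = pt n a then 2 * clif n b \<beta> T else 0) - clif n u (clif n a (clif n b \<beta>)) T"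
      using clif_anticomm[OF assms(1,3), of "clif n b \<beta>" T] by (simp add: eq_diff_eq)
    finally show ?thesis by simp
  qed
  have 2: "clif n b (clif n a (clif n u \<beta>)) T = 2 * (if u = pt n a then clif n b \<beta> T else 0)
     - 2 * (if u = pt n b then clif n a \<beta> T else 0) + clif n u (clif n b (clif n a \<beta>)) T"
  proof -
    have "clif n b (clif n a (clif n u \<beta>)) T = clif n b (\<lambda>T. (if u = pt n a then 2 * \<beta> T else 0) - clif n u (clif n a \<beta>) T) T"
      by (simp only: clif_anticomm_swap[OF assms(1,3)])
    also have "\<dots> = 2 * (if u = pt n a then clif n b \<beta> T else 0) - clif n b (clif n u (clif n a \<beta>)) T"
      by (simp add: clif_lin clif_if)
    also have "clif n b (clif n u (clif n a \<beta>)) T = (if u = pt n b then 2 * clif n a \<beta> T else 0) - clif n u (clif n b (clif n a \<beta>)) T"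
      using clif_anticomm[OF assms(2,3), of "clif n a \<beta>" T] by (simp add: eq_diff_eq)
    finally show ?thesis by simp
  qed
  show ?thesis unfolding rhoS_alt 1 2 by (simp add: clif_lin algebra_simps)
qed

definition onV :: "((nat set \<Rightarrow> complex) \<Rightarrow> (nat set \<Rightarrow> complex)) \<Rightarrow> (nat set \<times> nat set \<Rightarrow> complex) \<Rightarrow> (nat set \<times> nat set \<Rightarrow> complex)" where
  "onV A w = (\<lambda>(S,T). A (\<lambda>S'. w (S',T)) S)"
definition onS :: "((nat set \<Rightarrow> complex) \<Rightarrow> (nat set \<Rightarrow> complex)) \<Rightarrow> (nat set \<times> nat set \<Rightarrow> complex) \<Rightarrow> (nat set \<times> nat set \<Rightarrow> complex)" where
  "onS B w = (\<lambda>(S,T). B (\<lambda>T'. w (S,T')) T)"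

lemma onV_app: "onV A w (S,T) = A (\<lambda>S'. w (S',T)) S" by (simp add: onV_def)
lemma onS_app: "onS B w (S,T) = B (\<lambda>T'. w (S,T')) T" by (simp add: onS_def)

lemma act_split: "act n a b w = (\<lambda>z. onV (rhoV n a b) w z + onS (rhoS n a b) w z)"
  by (auto simp: act_def onV_def onS_def fun_eq_iff)

lemma lin_onV: "lin A \<Longrightarrow> lin (onV A)"
  unfolding lin_def onV_def by (auto simp: fun_eq_iff)
lemma lin_onS: "lin B \<Longrightarrow> lin (onS B)"
  unfolding lin_def onS_def by (auto simp: fun_eq_iff)

lemma lin_act: "lin (act n a b)"
  using lin_onV[OF lin_rhoV, of n a b] lin_onS[OF lin_rhoS, of n a b]
  unfolding lin_def act_split by (simp add: algebra_simps)

(* Monomial operators send each basis vector to a multiple of a basis vector.  For those,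
   A (x) id and id (x) B commute for every linear B (resp. A) by a pointwise computation. *)

definition monomial_op :: "((nat set \<Rightarrow> complex) \<Rightarrow> (nat set \<Rightarrow> complex)) \<Rightarrow> bool" where
  "monomial_op B \<longleftrightarrow> (\<exists>P s g. \<forall>f x. B f x = (if P x then s x * f (g x) else 0))"

lemma monomial_ext: "monomial_op (ext c)"
  unfolding monomial_op_def ext_def
  by (rule exI[of _ "\<lambda>x. c \<in> x"], rule exI[of _ "\<lambda>x. sgnb c (x - {c})"], rule exI[of _ "\<lambda>x. x - {c}"]) simp

lemma monomial_clif: "monomial_op (clif n c)"
proof (cases "c \<le> n")
  case True
  then have "clif n c = ext c" by (auto simp: clif_def fun_eq_iff)
  then show ?thesis using monomial_ext by simp
next
  case False
  have "\<forall>f x. clif n c f x = (if c - n \<notin> x then 2 * sgnb (c - n) x * f (insert (c - n) x) else 0)"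
    using False by (simp add: clif_def ctr_def)
  then show ?thesis unfolding monomial_op_def
    by (intro exI[of _ "\<lambda>x. c - n \<notin> x"] exI[of _ "\<lambda>x. 2 * sgnb (c - n) x"] exI[of _ "\<lambda>x. insert (c - n) x"]) simp
qed

lemma onV_onS_commute_left: assumes "monomial_op A" "lin B" shows "onV A (onS B w) = onS B (onV A w)"
proof -
  obtain P s g where A: "\<And>f x. A f x = (if P x then s x * f (g x) else 0)"
    using assms(1) unfolding monomial_op_def by blast
  show ?thesis
    by (auto simp: fun_eq_iff onV_def onS_def A lin_scal[OF assms(2)] lin_zero[OF assms(2)] lin_if[OF assms(2)])
qed

lemma onV_onS_commute_right: assumes "lin A" "monomial_op B" shows "onV A (onS B w) = onS B (onV A w)"
proof -
  obtain P s g where B: "\<And>f x. B f x = (if P x then s x * f (g x) else 0)"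
    using assms(2) unfolding monomial_op_def by blast
  show ?thesis
    by (auto simp: fun_eq_iff onV_def onS_def B lin_scal[OF assms(1)] lin_zero[OF assms(1)] lin_if[OF assms(1)])
qed

lemma onV_rhoV_ext: "onV (rhoV n a b) (onV (ext c) Y) = (\<lambda>z. onV (ext c) (onV (rhoV n a b) Y) z
   + (if c = pt n b then onV (ext a) Y z else 0) - (if c = pt n a then onV (ext b) Y z else 0))"
  by (auto simp: fun_eq_iff onV_def rhoV_ext_commute)

lemma onS_rhoS_clif: assumes "a \<in> {1..2*n}" "b \<in> {1..2*n}" "u \<in> {1..2*n}"
  shows "onS (rhoS n a b) (onS (clif n u) Y) = (\<lambda>z. onS (clif n u) (onS (rhoS n a b) Y) z
   + (if u = pt n b then onS (clif n a) Y z else 0) - (if u = pt n a then onS (clif n b) Y z else 0))"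
  by (auto simp: fun_eq_iff onS_def rhoS_clif_commute[OF assms])

(* The map E = sum_c e_c (x) gamma(pt c), where pt c indexes the q-dual basis vector of c:
   multiplication by the so(V)-invariant tensor of q. *)

definition Eterm :: "nat \<Rightarrow> nat \<Rightarrow> (nat set \<times> nat set \<Rightarrow> complex) \<Rightarrow> (nat set \<times> nat set \<Rightarrow> complex)" where
  "Eterm n c w = onV (ext c) (onS (clif n (pt n c)) w)"

definition Emult :: "nat \<Rightarrow> (nat set \<times> nat set \<Rightarrow> complex) \<Rightarrow> (nat set \<times> nat set \<Rightarrow> complex)" where
  "Emult n w = (\<lambda>z. \<Sum>c\<in>{1..2*n}. Eterm n c w z)"

lemma lin_Emult: "lin (Emult n)"
proof -
  have "lin (Eterm n c)" for c
    unfolding Eterm_def by (rule lin_comp[OF lin_onV[OF lin_ext] lin_onS[OF lin_clif]])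
  then show ?thesis
    unfolding lin_def Emult_def by (simp add: sum.distrib sum_distrib_left)
qed

lemma act_Eterm:
  assumes ab: "a \<in> {1..2*n}" "b \<in> {1..2*n}" and c: "c \<in> {1..2*n}"
  shows "act n a b (Eterm n c w) z = Eterm n c (act n a b w) z
     + (if c = pt n b then onV (ext a) (onS (clif n b) w) z else 0)
     - (if c = pt n a then onV (ext b) (onS (clif n a) w) z else 0)
     + (if c = b then onV (ext b) (onS (clif n a) w) z else 0)
     - (if c = a then onV (ext a) (onS (clif n b) w) z else 0)"
proof -
  have pc: "pt n c \<in> {1..2*n}" by (rule pt_range[OF c])
  have V: "onV (rhoV n a b) (Eterm n c w) z = Eterm n c (onV (rhoV n a b) w) z
     + (if c = pt n b then onV (ext a) (onS (clif n (pt n c)) w) z else 0)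
     - (if c = pt n a then onV (ext b) (onS (clif n (pt n c)) w) z else 0)"
    by (simp add: Eterm_def onV_rhoV_ext onV_onS_commute_right[OF lin_rhoV monomial_clif])
  have S: "onS (rhoS n a b) (Eterm n c w) z = Eterm n c (onS (rhoS n a b) w) z
     + (if pt n c = pt n b then onV (ext c) (onS (clif n a) w) z else 0)
     - (if pt n c = pt n a then onV (ext c) (onS (clif n b) w) z else 0)"
    by (simp add: Eterm_def onV_onS_commute_left[OF monomial_ext lin_rhoS, symmetric] onS_rhoS_clif[OF ab pc]
        lin_add[OF lin_onV[OF lin_ext]] lin_diff[OF lin_onV[OF lin_ext]] lin_if[OF lin_onV[OF lin_ext]])
  have split: "Eterm n c (act n a b w) z = Eterm n c (onV (rhoV n a b) w) z + Eterm n c (onS (rhoS n a b) w) z"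
    by (simp add: act_split Eterm_def lin_add[OF lin_onV[OF lin_ext]] lin_add[OF lin_onS[OF lin_clif]])
  have Vb: "(if c = pt n b then onV (ext a) (onS (clif n (pt n c)) w) z else 0)
      = (if c = pt n b then onV (ext a) (onS (clif n b) w) z else 0)"
    using pt_pt[OF ab(2)] by auto
  have Va: "(if c = pt n a then onV (ext b) (onS (clif n (pt n c)) w) z else 0)
      = (if c = pt n a then onV (ext b) (onS (clif n a) w) z else 0)"
    using pt_pt[OF ab(1)] by auto
  have Sb: "(if pt n c = pt n b then onV (ext c) (onS (clif n a) w) z else 0)
      = (if c = b then onV (ext b) (onS (clif n a) w) z else 0)"
    using pt_pt ab c by metis
  have Sa: "(if pt n c = pt n a then onV (ext c) (onS (clif n b) w) z else 0)
      = (if c = a then onV (ext a) (onS (clif n b) w) z else 0)"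
    using pt_pt ab c by metis
  have "act n a b (Eterm n c w) z = onV (rhoV n a b) (Eterm n c w) z + onS (rhoS n a b) (Eterm n c w) z"
    by (simp add: act_split)
  then show ?thesis
    unfolding V S Vb Va Sb Sa split by (simp add: algebra_simps)
qed

(* E is so(V)-equivariant: the correction terms of act_Eterm cancel in the sum over c. *)

lemma Emult_equivariant:
  assumes ab: "a \<in> {1..2*n}" "b \<in> {1..2*n}"
  shows "Emult n (act n a b w) = act n a b (Emult n w)"
proof
  fix z
  define A where "A = onV (ext a) (onS (clif n b) w) z"
  define B where "B = onV (ext b) (onS (clif n a) w) z"
  have pab: "pt n a \<in> {1..2*n}" "pt n b \<in> {1..2*n}" using pt_range ab by auto
  have "act n a b (Emult n w) z = (\<Sum>c\<in>{1..2*n}. act n a b (Eterm n c w) z)"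
    unfolding Emult_def lin_sum[OF lin_act] ..
  also have "\<dots> = (\<Sum>c\<in>{1..2*n}. Eterm n c (act n a b w) z
      + ((if c = pt n b then A else 0) - (if c = pt n a then B else 0)
      + (if c = b then B else 0) - (if c = a then A else 0)))"
    using act_Eterm[OF ab] unfolding A_def B_def by (intro sum.cong refl) (simp add: algebra_simps)
  also have "\<dots> = Emult n (act n a b w) z + (A - B + B - A)"
    unfolding sum.distrib sum_subtractf Emult_def using ab pab by (simp add: sum.delta')
  finally show "Emult n (act n a b w) z = act n a b (Emult n w) z" by simp
qed

(* The graded pieces wedge^k V (x) wedge^par E of the tensor product, par = True meaning odd
   degree; Wmod n k is the odd piece. *)

definition Wsp :: "nat \<Rightarrow> nat \<Rightarrow> bool \<Rightarrow> (nat set \<times> nat set \<Rightarrow> complex) set" where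
  "Wsp n k par = {w. \<forall>S T. w (S,T) \<noteq> 0 \<longrightarrow> S \<subseteq> {1..2*n} \<and> card S = k \<and> T \<subseteq> {1..n} \<and> odd (card T) = par}"

lemma Wmod_Wsp: "Wmod n k = Wsp n k True" by (simp add: Wmod_def Wsp_def)

lemma Wsp_mult: assumes "w \<in> Wsp n k par" "\<And>z. w' z = f z * w z" shows "w' \<in> Wsp n k par"
  unfolding Wsp_def
proof (intro CollectI allI impI)
  fix S T assume "w' (S,T) \<noteq> 0"
  then have "w (S,T) \<noteq> 0" using assms(2) by auto
  then show "S \<subseteq> {1..2*n} \<and> card S = k \<and> T \<subseteq> {1..n} \<and> odd (card T) = par"
    using assms(1) unfolding Wsp_def by blast
qed

lemma Wsp_add: assumes "x \<in> Wsp n k par" "y \<in> Wsp n k par" shows "(\<lambda>z. x z + y z) \<in> Wsp n k par"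
  unfolding Wsp_def
proof (intro CollectI allI impI)
  fix S T assume "x (S,T) + y (S,T) \<noteq> 0"
  then have "x (S,T) \<noteq> 0 \<or> y (S,T) \<noteq> 0" by auto
  then show "S \<subseteq> {1..2*n} \<and> card S = k \<and> T \<subseteq> {1..n} \<and> odd (card T) = par"
    using assms unfolding Wsp_def by blast
qed

lemma Wsp_zero: "(\<lambda>z. 0) \<in> Wsp n k par" unfolding Wsp_def by auto

lemma subsp_Wsp: "subsp (Wsp n k par)"
proof -
  have "(\<lambda>z. c * x z) \<in> Wsp n k par" if "x \<in> Wsp n k par" for c x
    using that by (rule Wsp_mult[where f="\<lambda>_. c"]) simp
  then show ?thesis unfolding subsp_def using Wsp_zero Wsp_add by blast
qed

definition supp :: "('x \<Rightarrow> complex) \<Rightarrow> ('x \<Rightarrow> bool) \<Rightarrow> bool" where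
  "supp f G \<longleftrightarrow> (\<forall>x. f x \<noteq> 0 \<longrightarrow> G x)"

definition wedgeV_dom :: "nat \<Rightarrow> nat \<Rightarrow> nat set \<Rightarrow> bool" where
  "wedgeV_dom n k S \<longleftrightarrow> S \<subseteq> {1..2*n} \<and> card S = k"
definition wedgeE_dom :: "nat \<Rightarrow> bool \<Rightarrow> nat set \<Rightarrow> bool" where
  "wedgeE_dom n par T \<longleftrightarrow> T \<subseteq> {1..n} \<and> odd (card T) = par"

lemma supp_diff: "supp f G \<Longrightarrow> supp g G \<Longrightarrow> supp (\<lambda>x. f x - g x) G"
  unfolding supp_def by (metis diff_zero)
lemma supp_scal: "supp f G \<Longrightarrow> supp (\<lambda>x. c * f x) G"
  unfolding supp_def by auto

lemma supp_ext: assumes "c \<in> {1..2*n}" "supp \<alpha> (\<lambda>S. S \<subseteq> {1..2*n} \<and> Suc (card S) = k)"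
  shows "supp (ext c \<alpha>) (wedgeV_dom n k)"
  unfolding supp_def wedgeV_dom_def
proof (intro allI impI)
  fix S assume "ext c \<alpha> S \<noteq> 0"
  then have c: "c \<in> S" and a: "\<alpha> (S - {c}) \<noteq> 0" by (auto simp: ext_def split: if_splits)
  have s: "S - {c} \<subseteq> {1..2*n}" "Suc (card (S - {c})) = k" using assms(2) a unfolding supp_def by auto
  have "finite (S - {c})" using s(1) by (rule finite_subset) simp
  then have f: "finite S" by simp
  have "Suc (card (S - {c})) = card S" using f c by (rule card_Suc_Diff1)
  then show "S \<subseteq> {1..2*n} \<and> card S = k" using s c assms(1) f by auto
qed

lemma supp_ctr: assumes "supp \<alpha> (wedgeV_dom n k)"
  shows "supp (ctr c \<alpha>) (\<lambda>S. S \<subseteq> {1..2*n} \<and> Suc (card S) = k)"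
  unfolding supp_def
proof (intro allI impI)
  fix S assume "ctr c \<alpha> S \<noteq> 0"
  then have c: "c \<notin> S" and a: "\<alpha> (insert c S) \<noteq> 0" by (auto simp: ctr_def split: if_splits)
  have s: "insert c S \<subseteq> {1..2*n}" "card (insert c S) = k" using assms a unfolding supp_def wedgeV_dom_def by auto
  have f: "finite S" using s(1) by (meson finite_atLeastAtMost finite_insert finite_subset)
  show "S \<subseteq> {1..2*n} \<and> Suc (card S) = k" using s c f by auto
qed

lemma supp_rhoV: assumes "a \<in> {1..2*n}" "b \<in> {1..2*n}" "supp \<alpha> (wedgeV_dom n k)"
  shows "supp (rhoV n a b \<alpha>) (wedgeV_dom n k)"
  unfolding rhoV_def by (intro supp_diff supp_ext supp_ctr assms)

lemma supp_clif: assumes "c \<in> {1..2*n}" "supp \<beta> (wedgeE_dom n par)"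
  shows "supp (clif n c \<beta>) (wedgeE_dom n (\<not> par))"
  unfolding supp_def
proof (intro allI impI)
  fix T assume nz: "clif n c \<beta> T \<noteq> 0"
  show "wedgeE_dom n (\<not> par) T"
  proof (cases "c \<le> n")
    case True
    then have c: "c \<in> T" and a: "\<beta> (T - {c}) \<noteq> 0" using nz by (auto simp: clif_def ext_def split: if_splits)
    have s: "T - {c} \<subseteq> {1..n}" "odd (card (T - {c})) = par" using assms(2) a unfolding supp_def wedgeE_dom_def by auto
    have "finite (T - {c})" using s(1) by (rule finite_subset) simp
    then have f: "finite T" by simp
    have "card T = Suc (card (T - {c}))" using card_Suc_Diff1[OF f c] by simp
    then show ?thesis using s c assms(1) True unfolding wedgeE_dom_def by auto
  next
    case False
    then have c: "c - n \<notin> T" and a: "\<beta> (insert (c - n) T) \<noteq> 0" using nz by (auto simp: clif_def ctr_def split: if_splits)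
    have s: "insert (c - n) T \<subseteq> {1..n}" "odd (card (insert (c-n) T)) = par" using assms(2) a unfolding supp_def wedgeE_dom_def by auto
    have f: "finite T" using s(1) by (meson finite_atLeastAtMost finite_insert finite_subset)
    show ?thesis using s c f unfolding wedgeE_dom_def by auto
  qed
qed

lemma supp_rhoS: assumes "a \<in> {1..2*n}" "b \<in> {1..2*n}" "supp \<beta> (wedgeE_dom n par)"
  shows "supp (rhoS n a b \<beta>) (wedgeE_dom n par)"
proof -
  have "supp (clif n a (clif n b \<beta>)) (wedgeE_dom n par)" using supp_clif[OF assms(1) supp_clif[OF assms(2,3)]] by simp
  moreover have "supp (clif n b (clif n a \<beta>)) (wedgeE_dom n par)" using supp_clif[OF assms(2) supp_clif[OF assms(1,3)]] by simp
  ultimately show ?thesis unfolding rhoS_alt by (intro supp_scal supp_diff)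
qed

lemma Wsp_row: "w \<in> Wsp n k par \<Longrightarrow> supp (\<lambda>S'. w (S',T)) (wedgeV_dom n k)"
  unfolding Wsp_def supp_def wedgeV_dom_def by auto
lemma Wsp_col: "w \<in> Wsp n k par \<Longrightarrow> supp (\<lambda>T'. w (S,T')) (wedgeE_dom n par)"
  unfolding Wsp_def supp_def wedgeE_dom_def by auto
lemma Wsp_row_zero: "w \<in> Wsp n k par \<Longrightarrow> \<not> wedgeE_dom n par T \<Longrightarrow> (\<lambda>S'. w (S',T)) = (\<lambda>S'. 0)"
  unfolding Wsp_def wedgeE_dom_def by fastforce
lemma Wsp_col_zero: "w \<in> Wsp n k par \<Longrightarrow> \<not> wedgeV_dom n k S \<Longrightarrow> (\<lambda>T'. w (S,T')) = (\<lambda>T'. 0)"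
  unfolding Wsp_def wedgeV_dom_def by fastforce

lemma act_Wsp: assumes "a \<in> {1..2*n}" "b \<in> {1..2*n}" "w \<in> Wsp n k par"
  shows "act n a b w \<in> Wsp n k par"
  unfolding Wsp_def
proof (intro CollectI allI impI)
  fix S T assume nz: "act n a b w (S,T) \<noteq> 0"
  have "wedgeV_dom n k S \<and> wedgeE_dom n par T"
  proof (cases "rhoV n a b (\<lambda>S'. w (S',T)) S = 0")
    case True
    then have nzS: "rhoS n a b (\<lambda>T'. w (S,T')) T \<noteq> 0" using nz by (simp add: act_def)
    then have "wedgeV_dom n k S" using Wsp_col_zero[OF assms(3)] lin_zero[OF lin_rhoS] by metis
    then show ?thesis using nzS supp_rhoS[OF assms(1,2) Wsp_col[OF assms(3)]] unfolding supp_def by auto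
  next
    case False
    then have "wedgeE_dom n par T" using Wsp_row_zero[OF assms(3)] lin_zero[OF lin_rhoV] by metis
    then show ?thesis using False supp_rhoV[OF assms(1,2) Wsp_row[OF assms(3)]] unfolding supp_def by auto
  qed
  then show "S \<subseteq> {1..2*n} \<and> card S = k \<and> T \<subseteq> {1..n} \<and> odd (card T) = par"
    unfolding wedgeV_dom_def wedgeE_dom_def by auto
qed

lemma Emult_Wsp: assumes "x \<in> Wsp n k False" shows "Emult n x \<in> Wmod n (Suc k)"
  unfolding Wmod_Wsp Wsp_def
proof (intro CollectI allI impI)
  fix S T assume nz: "Emult n x (S,T) \<noteq> 0"
  then obtain c where c: "c \<in> {1..2*n}" and nzc: "Eterm n c x (S,T) \<noteq> 0"
    unfolding Emult_def by (meson sum.neutral)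
  define g where "g = (\<lambda>S'. clif n (pt n c) (\<lambda>T'. x (S',T')) T)"
  have nzg: "ext c g S \<noteq> 0" using nzc by (simp add: Eterm_def onV_app onS_app g_def)
  have pc: "pt n c \<in> {1..2*n}" using pt_range[OF c] .
  have sg: "supp g (\<lambda>S. S \<subseteq> {1..2*n} \<and> Suc (card S) = Suc k)"
    unfolding supp_def
  proof (intro allI impI)
    fix S' assume "g S' \<noteq> 0"
    then have "wedgeV_dom n k S'" using Wsp_col_zero[OF assms(1), of S'] lin_zero[OF lin_clif] unfolding g_def by metis
    then show "S' \<subseteq> {1..2*n} \<and> Suc (card S') = Suc k" unfolding wedgeV_dom_def by auto
  qed
  have gT: "wedgeE_dom n True T"
  proof -
    obtain S' where "g S' \<noteq> 0" using nzg by (auto simp: ext_def split: if_splits)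
    then show ?thesis using supp_clif[OF pc Wsp_col[OF assms(1)], of S'] unfolding g_def supp_def by auto
  qed
  have "wedgeV_dom n (Suc k) S" using supp_ext[OF c sg] nzg unfolding supp_def by auto
  then show "S \<subseteq> {1..2*n} \<and> card S = Suc k \<and> T \<subseteq> {1..n} \<and> odd (card T) = True"
    using gT unfolding wedgeV_dom_def wedgeE_dom_def by auto
qed

lemma wedge_Cons: "wedge_list (x # xs) = ext x (wedge_list xs)"
  by (simp add: wedge_list_def)

lemma foldr_ext: "foldr ext xs (ext y \<alpha>) = (\<lambda>S. (-1)^length xs * ext y (foldr ext xs \<alpha>) S)"
proof (induction xs)
  case Nil then show ?case by simp
next
  case (Cons x xs)
  have "foldr ext (x # xs) (ext y \<alpha>) = ext x (\<lambda>S. (-1)^length xs * ext y (foldr ext xs \<alpha>) S)"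
    using Cons by simp
  also have "\<dots> = (\<lambda>S. (-1)^length xs * ext x (ext y (foldr ext xs \<alpha>)) S)" by (simp add: ext_lin)
  also have "\<dots> = (\<lambda>S. (-1)^length (x # xs) * ext y (foldr ext (x # xs) \<alpha>) S)"
    by (simp add: ext_anticomm[of x y])
  finally show ?case .
qed

lemma wedge_snoc: "wedge_list (xs @ [y]) = (\<lambda>S. (-1)^length xs * ext y (wedge_list xs) S)"
  unfolding wedge_list_def by (simp add: foldr_ext)

lemma wedge_supp: "wedge_list xs S \<noteq> 0 \<Longrightarrow> S = set xs \<and> distinct xs"
proof (induction xs arbitrary: S)
  case Nil then show ?case by (simp add: wedge_list_def split: if_splits)
next
  case (Cons x xs)
  then have x: "x \<in> S" and nz: "wedge_list xs (S - {x}) \<noteq> 0"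
    by (auto simp: wedge_Cons ext_def split: if_splits)
  from Cons.IH[OF nz] have "S - {x} = set xs" "distinct xs" by auto
  then show ?case using x by auto
qed

definition IF_list :: "nat \<Rightarrow> nat set \<Rightarrow> nat list" where
  "IF_list n I = sorted_list_of_set I @ map (\<lambda>x. x + n) (sorted_list_of_set I)"

definition omega :: "nat \<Rightarrow> nat \<Rightarrow> nat \<Rightarrow> nat set \<Rightarrow> complex" where
  "omega n m i = (\<lambda>S. \<Sum>I\<in>{I. I \<subseteq> {1..n} \<and> card I = m - i - 1}. wedge_list (IF_list n I) S)"

definition phi :: "nat \<Rightarrow> nat \<Rightarrow> nat \<Rightarrow> nat set \<times> nat set \<Rightarrow> complex" where
  "phi n m i = (\<lambda>(S,T). omega n m i S * (if T = {} then 1 else 0))"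

lemma phi_Wsp: "phi n m i \<in> Wsp n (2 * (m - i - 1)) False"
  unfolding Wsp_def
proof (intro CollectI allI impI)
  fix S T assume nz: "phi n m i (S,T) \<noteq> 0"
  then have T: "T = {}" and o: "omega n m i S \<noteq> 0" by (auto simp: phi_def split: if_splits)
  from o obtain I where I: "I \<in> {I. I \<subseteq> {1..n} \<and> card I = m - i - 1}" and w: "wedge_list (IF_list n I) S \<noteq> 0"
    unfolding omega_def using sum.not_neutral_contains_not_neutral by blast
  from wedge_supp[OF w] have S: "S = set (IF_list n I)" "distinct (IF_list n I)" by auto
  have I1: "I \<subseteq> {1..n}" and I2: "card I = m - i - 1" using I by auto
  have fI: "finite I" using I1 finite_subset by blast
  have "card S = length (IF_list n I)" using S distinct_card by metis
  also have "\<dots> = 2 * card I" by (simp add: IF_list_def)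
  finally have c: "card S = 2 * (m - i - 1)" using I2 by simp
  have "set (IF_list n I) = I \<union> (\<lambda>x. x + n) ` I" using fI by (simp add: IF_list_def)
  then have "S \<subseteq> {1..2*n}" using S(1) I1 by auto
  then show "S \<subseteq> {1..2*n} \<and> card S = 2 * (m - i - 1) \<and> T \<subseteq> {1..n} \<and> odd (card T) = False"
    using c T by simp
qed

(* gamma(pt c) applied to the vacuum 1 of wedge E vanishes for c <= n (it is a contraction)
   and gives e_{c-n} for c > n; hence E(omega (x) 1) = sum_{c > n} e_c /\ omega (x) e_{c-n}. *)

lemma clif_vacuum: assumes "c \<in> {1..2*n}"
  shows "clif n (pt n c) (\<lambda>T'. a * (if T' = {} then 1 else 0)) T = (if n < c \<and> T = {c - n} then a else 0)"
proof (cases "c \<le> n")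
  case True
  then show ?thesis using assms by (auto simp: clif_def pt_def ctr_def)
next
  case False
  then have p: "pt n c = c - n" "c - n \<le> n" "c - n \<ge> 1" using assms by (auto simp: pt_def)
  show ?thesis
  proof (cases "T = {c - n}")
    case True then show ?thesis using p False by (simp add: clif_def ext_def sgnb_def)
  next
    case F2: False
    have "c - n \<in> T \<Longrightarrow> T - {c - n} \<noteq> {}" using F2 by auto
    then show ?thesis using p False F2 by (auto simp: clif_def ext_def)
  qed
qed

lemma Emult_phi: "Emult n (phi n m i) (S,T) = (\<Sum>c\<in>{1..2*n}. if n < c \<and> T = {c - n} then ext c (omega n m i) S else 0)"
proof -
  have "Emult n (phi n m i) (S,T) = (\<Sum>c\<in>{1..2*n}. ext c (\<lambda>S'. clif n (pt n c) (\<lambda>T'. omega n m i S' * (if T' = {} then 1 else 0)) T) S)"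
    unfolding Emult_def Eterm_def by (simp add: onV_app onS_app phi_def)
  also have "\<dots> = (\<Sum>c\<in>{1..2*n}. ext c (\<lambda>S'. if n < c \<and> T = {c - n} then omega n m i S' else 0) S)"
    by (rule sum.cong) (simp_all add: clif_vacuum)
  also have "\<dots> = (\<Sum>c\<in>{1..2*n}. if n < c \<and> T = {c - n} then ext c (omega n m i) S else 0)"
    by (rule sum.cong) (simp_all add: ext_if[of _ _ "omega n m i", simplified])
  finally show ?thesis .
qed

lemma sum_upper_half: fixes n :: nat shows "(\<Sum>c\<in>{1..2*n}. if n < c \<and> T = {c - n} then g c else 0)
   = (\<Sum>j\<in>{1..n}. if T = {j} then g (n + j) else (0::complex))"
proof -
  have im: "(\<lambda>j. n + j) ` {1..n} = {n+1..2*n}"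
  proof
    show "(\<lambda>j. n + j) ` {1..n} \<subseteq> {n+1..2*n}" by auto
    show "{n+1..2*n} \<subseteq> (\<lambda>j. n + j) ` {1..n}"
    proof
      fix c assume "c \<in> {n+1..2*n}"
      then have "c = n + (c - n)" "c - n \<in> {1..n}" by auto
      then show "c \<in> (\<lambda>j. n + j) ` {1..n}" by blast
    qed
  qed
  have "(\<Sum>j\<in>{1..n}. if T = {j} then g (n + j) else (0::complex))
      = (\<Sum>j\<in>{1..n}. (\<lambda>c. if n < c \<and> T = {c - n} then g c else 0) (n + j))"
    by (rule sum.cong) auto
  also have "\<dots> = (\<Sum>c\<in>(\<lambda>j. n + j) ` {1..n}. if n < c \<and> T = {c - n} then g c else 0)"
    by (rule sum.reindex[symmetric, unfolded comp_def]) (simp add: inj_on_def)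
  also have "\<dots> = (\<Sum>c\<in>{n+1..2*n}. if n < c \<and> T = {c - n} then g c else 0)" by (simp only: im)
  also have "\<dots> = (\<Sum>c\<in>{1..2*n}. if n < c \<and> T = {c - n} then g c else 0)"
    by (rule sum.mono_neutral_left) auto
  finally show ?thesis by simp
qed

lemma psi_eq: "psi n m i = Emult n (phi n m i)"
proof (rule ext, clarify)
  fix S T
  have w: "wedge_list (sorted_list_of_set I @ map (\<lambda>x. x + n) (sorted_list_of_set I) @ [n + j]) S
      = ext (n + j) (wedge_list (IF_list n I)) S" for I j
    unfolding append_assoc[symmetric] IF_list_def[symmetric] wedge_snoc by (simp add: IF_list_def)
  have "psi n m i (S,T) = (\<Sum>I\<in>{I. I \<subseteq> {1..n} \<and> card I = m - i - 1}. \<Sum>j\<in>{1..n}.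
      ext (n + j) (wedge_list (IF_list n I)) S * (if T = {j} then 1 else 0))"
    unfolding psi_def by (simp add: w)
  also have "\<dots> = (\<Sum>j\<in>{1..n}. \<Sum>I\<in>{I. I \<subseteq> {1..n} \<and> card I = m - i - 1}.
      ext (n + j) (wedge_list (IF_list n I)) S * (if T = {j} then 1 else 0))"
    by (rule sum.swap)
  also have "\<dots> = (\<Sum>j\<in>{1..n}. if T = {j} then ext (n + j) (omega n m i) S else 0)"
    unfolding omega_def ext_lin sum_distrib_right[symmetric] by (intro sum.cong refl) simp
  also have "\<dots> = Emult n (phi n m i) (S,T)" unfolding Emult_phi sum_upper_half ..
  finally show "psi n m i (S,T) = Emult n (phi n m i) (S,T)" .
qed

definition hweight :: "nat \<Rightarrow> nat \<Rightarrow> nat set \<Rightarrow> nat set \<Rightarrow> real" where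
  "hweight n j S T = (if j \<in> S then 1 else 0) - (if n + j \<in> S then 1 else 0) + (if j \<in> T then 1/2 else -1/2)"

lemma ext_ctr_same: "ext c (ctr c \<alpha>) S = (if c \<in> S then \<alpha> S else 0)"
  by (auto simp: ext_def ctr_def insert_absorb)
lemma ctr_ext_same: "ctr c (ext c \<alpha>) S = (if c \<notin> S then \<alpha> S else 0)"
  by (auto simp: ext_def ctr_def)

lemma act_H_diag: assumes "j \<in> {1..n}"
  shows "act n j (n + j) w (S,T) = complex_of_real (hweight n j S T) * w (S,T)"
proof -
  have p: "pt n (n + j) = j" "pt n j = n + j" using assms by (auto simp: pt_def)
  have c: "clif n j = ext j" "clif n (n + j) = (\<lambda>\<beta> T. 2 * ctr j \<beta> T)" using assms by (auto simp: clif_def fun_eq_iff)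
  show ?thesis
    unfolding act_def rhoV_def rhoS_def p c
    by (simp add: ext_lin ext_ctr_same ctr_ext_same hweight_def)
qed

definition Hsum :: "nat \<Rightarrow> nat \<Rightarrow> (nat set \<times> nat set \<Rightarrow> complex) \<Rightarrow> (nat set \<times> nat set \<Rightarrow> complex)" where
  "Hsum n k w = (\<lambda>z. \<Sum>j\<in>{1..k}. act n j (n + j) w z)"

definition Hweight :: "nat \<Rightarrow> nat \<Rightarrow> nat set \<Rightarrow> nat set \<Rightarrow> real" where
  "Hweight n k S T = (\<Sum>j\<in>{1..k}. hweight n j S T)"

fun Hpoly :: "nat \<Rightarrow> nat \<Rightarrow> complex list \<Rightarrow> (nat set \<times> nat set \<Rightarrow> complex) \<Rightarrow> (nat set \<times> nat set \<Rightarrow> complex)" where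
  "Hpoly n k [] w = w"
| "Hpoly n k (c # cs) w = (\<lambda>z. Hsum n k (Hpoly n k cs w) z - c * Hpoly n k cs w z)"

lemma Hsum_diag: assumes "k \<le> n" shows "Hsum n k w (S,T) = complex_of_real (Hweight n k S T) * w (S,T)"
  unfolding Hsum_def Hweight_def using assms by (simp add: act_H_diag sum_distrib_right)

lemma Hpoly_diag: assumes "k \<le> n"
  shows "Hpoly n k cs w (S,T) = (\<Prod>c\<leftarrow>cs. complex_of_real (Hweight n k S T) - c) * w (S,T)"
  by (induction cs) (simp_all add: Hsum_diag[OF assms] algebra_simps)

lemma Hpoly_Wsp: "k \<le> n \<Longrightarrow> w \<in> Wsp n K par \<Longrightarrow> Hpoly n k cs w \<in> Wsp n K par"
  by (rule Wsp_mult[where f="\<lambda>(S,T). \<Prod>c\<leftarrow>cs. complex_of_real (Hweight n k S T) - c"]) (auto simp: Hpoly_diag)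

lemma Hpoly_eigen:
  assumes "Hsum n k v = (\<lambda>z. L * v z)"
  shows "Hpoly n k cs v = (\<lambda>z. (\<Prod>c\<leftarrow>cs. L - c) * v z)"
proof (induction cs)
  case Nil then show ?case by simp
next
  case (Cons c cs)
  have "Hsum n k (\<lambda>z. (\<Prod>c\<leftarrow>cs. L - c) * v z) = (\<lambda>z. (\<Prod>c\<leftarrow>cs. L - c) * Hsum n k v z)"
    unfolding Hsum_def by (simp add: lin_scal[OF lin_act] sum_distrib_left)
  then show ?case using Cons by (simp add: assms algebra_simps)
qed

lemma Hweight_bound: assumes "finite S"
  shows "Hweight n k S T \<le> real (card S) + real k / 2"
proof -
  have "Hweight n k S T \<le> (\<Sum>j\<in>{1..k}. (if j \<in> S then 1 else 0) + 1/2)"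
    unfolding Hweight_def by (intro sum_mono) (simp add: hweight_def)
  also have "\<dots> = real (card ({1..k} \<inter> S)) + real k / 2"
    by (simp add: sum.distrib sum.inter_restrict[symmetric])
  also have "real (card ({1..k} \<inter> S)) \<le> real (card S)"
    using assms by (simp add: card_mono)
  finally show ?thesis by simp
qed

lemma Wsp_annihilating_poly:
  assumes "k \<le> n"
  shows "\<exists>cs. (\<forall>x\<in>Wsp n r par. Hpoly n k cs x = (\<lambda>_. 0))
             \<and> (\<forall>c\<in>set cs. \<exists>t. c = complex_of_real t \<and> t \<le> real r + real k / 2)"
proof -
  define Dom where "Dom = {(S,T). S \<subseteq> {1..2*n} \<and> card S = r \<and> T \<subseteq> {1..n}}"
  define Vals where "Vals = (\<lambda>(S,T). complex_of_real (Hweight n k S T)) ` Dom"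
  have "Dom \<subseteq> Pow {1..2*n} \<times> Pow {1..n}" unfolding Dom_def by auto
  then have "finite Vals" unfolding Vals_def by (metis finite_Pow_iff finite_SigmaI finite_atLeastAtMost finite_imageI finite_subset)
  then obtain cs where cs: "set cs = Vals" using finite_list by blast
  have kill: "Hpoly n k cs x = (\<lambda>_. 0)" if x: "x \<in> Wsp n r par" for x
  proof
    fix z
    obtain S T :: "nat set" where z: "z = (S,T)" by fastforce
    show "Hpoly n k cs x z = 0"
    proof (cases "x (S,T) = 0")
      case True then show ?thesis using z by (simp add: Hpoly_diag[OF assms])
    next
      case False
      then have "(S,T) \<in> Dom" using x unfolding Wsp_def Dom_def by auto
      then have "complex_of_real (Hweight n k S T) \<in> set cs" unfolding cs Vals_def by force
      then have "(\<Prod>c\<leftarrow>cs. complex_of_real (Hweight n k S T) - c) = 0"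
        by (simp add: prod_list_zero_iff)
      then show ?thesis using z by (simp add: Hpoly_diag[OF assms])
    qed
  qed
  have bound: "\<exists>t. c = complex_of_real t \<and> t \<le> real r + real k / 2" if c_cs: "c \<in> set cs" for c
  proof -
    obtain S T where ST: "(S,T) \<in> Dom" and c: "c = complex_of_real (Hweight n k S T)"
      using c_cs unfolding cs Vals_def by auto
    have "finite S" using ST unfolding Dom_def by (auto intro: finite_subset)
    then show ?thesis using c Hweight_bound[of S n k T] ST unfolding Dom_def by auto
  qed
  show ?thesis using kill bound by blast
qed

lemma Emult_Hpoly: assumes "k \<le> n" shows "Emult n (Hpoly n k cs x) = Hpoly n k cs (Emult n x)"
proof (induction cs)
  case Nil then show ?case by simp
next
  case (Cons c cs)
  have H: "Emult n (Hsum n k w) = Hsum n k (Emult n w)" for w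
    unfolding Hsum_def lin_sum[OF lin_Emult] using assms
    by (intro ext sum.cong refl) (simp add: Emult_equivariant)
  have "Emult n (Hpoly n k (c # cs) x) = (\<lambda>z. Emult n (Hsum n k (Hpoly n k cs x)) z - c * Emult n (Hpoly n k cs x) z)"
    by (simp add: lin_diff[OF lin_Emult] lin_scal[OF lin_Emult])
  then show ?case using Cons by (simp add: H)
qed

context
  fixes n K C p
  assumes ep: "equiv_proj n K C p"
begin

lemma p_add: "x \<in> Wmod n K \<Longrightarrow> y \<in> Wmod n K \<Longrightarrow> p (\<lambda>z. x z + y z) = (\<lambda>z. p x z + p y z)"
  using ep unfolding equiv_proj_def by blast
lemma p_scal: "x \<in> Wmod n K \<Longrightarrow> p (\<lambda>z. c * x z) = (\<lambda>z. c * p x z)"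
  using ep unfolding equiv_proj_def by blast
lemma p_zero: "p (\<lambda>z. 0) = (\<lambda>z. 0)"
  using p_scal[of "\<lambda>z. 0" 0] Wsp_zero[of n K True] by (simp add: Wmod_Wsp)
lemma p_C: "x \<in> Wmod n K \<Longrightarrow> p x \<in> C"
  using ep unfolding equiv_proj_def by blast
lemma p_act: "a \<in> {1..2*n} \<Longrightarrow> b \<in> {1..2*n} \<Longrightarrow> x \<in> Wmod n K \<Longrightarrow> p (act n a b x) = act n a b (p x)"
  using ep unfolding equiv_proj_def by blast

lemma p_sum: "finite J \<Longrightarrow> (\<And>j. j \<in> J \<Longrightarrow> f j \<in> Wmod n K) \<Longrightarrow>
   p (\<lambda>z. \<Sum>j\<in>J. f j z) = (\<lambda>z. \<Sum>j\<in>J. p (f j) z) \<and> (\<lambda>z. \<Sum>j\<in>J. f j z) \<in> Wmod n K"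
proof (induction J rule: finite_induct)
  case empty then show ?case by (simp add: p_zero Wsp_zero Wmod_Wsp)
next
  case (insert j J)
  then have h: "p (\<lambda>z. \<Sum>j\<in>J. f j z) = (\<lambda>z. \<Sum>j\<in>J. p (f j) z)" "(\<lambda>z. \<Sum>j\<in>J. f j z) \<in> Wmod n K" "f j \<in> Wmod n K"
    by auto
  have "p (\<lambda>z. f j z + (\<Sum>j\<in>J. f j z)) = (\<lambda>z. p (f j) z + p (\<lambda>z. \<Sum>j\<in>J. f j z) z)"
    by (rule p_add[OF h(3) h(2)])
  then show ?case using insert h by (simp add: Wsp_add Wmod_Wsp)
qed

lemma p_Hsum: assumes "k \<le> n" "y \<in> Wmod n K" shows "p (Hsum n k y) = Hsum n k (p y)"
proof -
  have a: "\<And>j. j \<in> {1..k} \<Longrightarrow> act n j (n + j) y \<in> Wmod n K"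
    using assms unfolding Wmod_Wsp by (intro act_Wsp) auto
  have "p (Hsum n k y) = (\<lambda>z. \<Sum>j\<in>{1..k}. p (act n j (n + j) y) z)"
    unfolding Hsum_def using p_sum[of "{1..k}" "\<lambda>j. act n j (n + j) y"] a by blast
  also have "\<dots> = Hsum n k (p y)" unfolding Hsum_def using assms
    by (intro ext sum.cong refl) (simp add: p_act)
  finally show ?thesis .
qed

lemma p_Hpoly: assumes "k \<le> n" "y \<in> Wmod n K" shows "p (Hpoly n k cs y) = Hpoly n k cs (p y)"
proof (induction cs)
  case Nil then show ?case by simp
next
  case (Cons c cs)
  have q: "Hpoly n k cs y \<in> Wmod n K" using Hpoly_Wsp assms unfolding Wmod_Wsp by blast
  have hq: "Hsum n k (Hpoly n k cs y) \<in> Wmod n K"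
    using q unfolding Wmod_Wsp
    by (rule Wsp_mult[where f="\<lambda>(S,T). complex_of_real (Hweight n k S T)"]) (auto simp: Hsum_diag[OF assms(1)])
  have s: "(\<lambda>z. - c * Hpoly n k cs y z) \<in> Wmod n K"
    using q unfolding Wmod_Wsp by (rule Wsp_mult[where f="\<lambda>z. - c"]) simp
  have "p (Hpoly n k (c # cs) y) = p (\<lambda>z. Hsum n k (Hpoly n k cs y) z + (\<lambda>z. - c * Hpoly n k cs y z) z)"
    by simp
  also have "\<dots> = (\<lambda>z. p (Hsum n k (Hpoly n k cs y)) z + p (\<lambda>z. - c * Hpoly n k cs y z) z)"
    by (rule p_add[OF hq s])
  also have "\<dots> = Hpoly n k (c # cs) (p y)"
  proof -
    have ps: "p (\<lambda>z. - (c * Hpoly n k cs y z)) = (\<lambda>z. - (c * p (Hpoly n k cs y) z))"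
      using p_scal[OF q, of "-c"] by simp
    show ?thesis using Cons by (simp add: ps p_Hsum[OF assms(1) q])
  qed
  finally show ?case .
qed

end

lemma subsp_image:
  assumes W: "subsp W"
    and add: "\<And>x y. x \<in> W \<Longrightarrow> y \<in> W \<Longrightarrow> f (\<lambda>z. x z + y z) = (\<lambda>z. f x z + f y z)"
    and scal: "\<And>c x. x \<in> W \<Longrightarrow> f (\<lambda>z. c * x z) = (\<lambda>z. c * f x z)"
  shows "subsp (f ` W)"
  unfolding subsp_def
proof (intro conjI ballI allI)
  have 0: "(\<lambda>_. 0) \<in> W" using W unfolding subsp_def by blast
  have "f (\<lambda>_. 0) = (\<lambda>_. 0)" using scal[OF 0, of 0] by simp
  then show "(\<lambda>_. 0) \<in> f ` W" using 0 by (metis image_eqI)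
next
  fix y1 y2 assume "y1 \<in> f ` W" "y2 \<in> f ` W"
  then obtain x1 x2 where x: "x1 \<in> W" "x2 \<in> W" "y1 = f x1" "y2 = f x2" by blast
  have "(\<lambda>z. x1 z + x2 z) \<in> W" using W x unfolding subsp_def by blast
  then show "(\<lambda>z. y1 z + y2 z) \<in> f ` W" using add[OF x(1,2)] x(3,4) by (metis image_eqI)
next
  fix c y assume "y \<in> f ` W"
  then obtain x where x: "x \<in> W" "y = f x" by blast
  have "(\<lambda>z. c * x z) \<in> W" using W x unfolding subsp_def by blast
  then show "(\<lambda>z. c * y z) \<in> f ` W" using scal[OF x(1)] x(2) by (metis image_eqI)
qed

lemma image_submodule:
  assumes ep: "equiv_proj n (Suc r) C p"
  defines "D \<equiv> (\<lambda>x. p (Emult n x)) ` Wsp n r False"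
  shows "subsp D" and "invariant n D" and "D \<subseteq> C"
proof -
  show "subsp D"
    unfolding D_def
  proof (rule subsp_image[OF subsp_Wsp])
    fix x y assume x: "x \<in> Wsp n r False" and y: "y \<in> Wsp n r False"
    show "p (Emult n (\<lambda>z. x z + y z)) = (\<lambda>z. p (Emult n x) z + p (Emult n y) z)"
      unfolding lin_add[OF lin_Emult] by (rule p_add[OF ep Emult_Wsp[OF x] Emult_Wsp[OF y]])
  next
    fix c x assume x: "x \<in> Wsp n r False"
    show "p (Emult n (\<lambda>z. c * x z)) = (\<lambda>z. c * p (Emult n x) z)"
      unfolding lin_scal[OF lin_Emult] by (rule p_scal[OF ep Emult_Wsp[OF x]])
  qed
  show "invariant n D"
    unfolding invariant_def D_def
  proof (intro ballI)
    fix a b y assume ab: "a \<in> {1..2*n}" "b \<in> {1..2*n}" and "y \<in> (\<lambda>x. p (Emult n x)) ` Wsp n r False"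
    then obtain x where x: "x \<in> Wsp n r False" "y = p (Emult n x)" by blast
    have "act n a b y = p (Emult n (act n a b x))"
      using x p_act[OF ep ab Emult_Wsp[OF x(1)]] Emult_equivariant[OF ab] by simp
    then show "act n a b y \<in> (\<lambda>x. p (Emult n x)) ` Wsp n r False"
      using act_Wsp[OF ab x(1)] by blast
  qed
  show "D \<subseteq> C" unfolding D_def using p_C[OF ep] Emult_Wsp by blast
qed

(* No vector of D is a highest weight vector of weight omega_{n-1} + omega_K: its H-eigenvalue
   3K/2 is not among the eigenvalues (at most r + K/2 < 3K/2) on the source of E. *)

lemma no_hw_in_image:
  assumes ep: "equiv_proj n (Suc r) C p" and Kn: "Suc r + 2 \<le> n" and x: "x \<in> Wsp n r False"
  shows "\<not> hw_vector n (\<lambda>j. omegaD n (n - 1) j + omegaD n (Suc r) j) (p (Emult n x))"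
proof
  define K where "K = Suc r"
  define v where "v = p (Emult n x)"
  define L where "L = complex_of_real (3 / 2 * real K)"
  assume "hw_vector n (\<lambda>j. omegaD n (n - 1) j + omegaD n (Suc r) j) (p (Emult n x))"
  then have v0: "v \<noteq> (\<lambda>_. 0)"
    and Hj: "\<And>j. j \<in> {1..n} \<Longrightarrow> act n j (n + j) v = (\<lambda>z. (omegaD n (n - 1) j + omegaD n K j) * v z)"
    unfolding hw_vector_def v_def K_def by auto
  have Kn': "K \<le> n" using Kn K_def by simp
  have Hv: "Hsum n K v = (\<lambda>z. L * v z)"
  proof
    fix z
    have "Hsum n K v z = (\<Sum>j\<in>{1..K}. (omegaD n (n - 1) j + omegaD n K j) * v z)"
      unfolding Hsum_def using Hj Kn' by (intro sum.cong refl) auto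
    also have "\<dots> = (\<Sum>j\<in>{1..K}. 3/2 * v z)"
      using Kn unfolding K_def omegaD_def by (intro sum.cong refl) auto
    finally show "Hsum n K v z = L * v z" unfolding L_def by simp
  qed
  obtain cs where kill: "Hpoly n K cs x = (\<lambda>_. 0)"
    and roots: "\<forall>c\<in>set cs. \<exists>t. c = complex_of_real t \<and> t \<le> real r + real K / 2"
    using Wsp_annihilating_poly[OF Kn', of r False] x by blast
  have "L \<notin> set cs"
  proof
    assume "L \<in> set cs"
    then obtain t where "L = complex_of_real t" and "t \<le> real r + real K / 2" using roots by blast
    then have "3 / 2 * real K \<le> real r + real K / 2" unfolding L_def of_real_eq_iff by simp
    then show False unfolding K_def by simp
  qed
  then have nz: "(\<Prod>c\<leftarrow>cs. L - c) \<noteq> 0" by (auto simp: prod_list_zero_iff)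
  have "(\<lambda>z. (\<Prod>c\<leftarrow>cs. L - c) * v z) = Hpoly n K cs v" by (rule Hpoly_eigen[OF Hv, symmetric])
  also have "\<dots> = p (Emult n (Hpoly n K cs x))"
    unfolding v_def Emult_Hpoly[OF Kn'] using p_Hpoly[OF ep[folded K_def] Kn' Emult_Wsp[OF x, folded K_def]] by simp
  also have "\<dots> = (\<lambda>_. 0)" using kill lin_zero[OF lin_Emult, of n] p_zero[OF ep] by simp
  finally show False using nz v0 by (auto simp: fun_eq_iff)
qed

theorem lemma4p5:
  fixes n m i :: nat
    and C :: "(nat set \<times> nat set \<Rightarrow> complex) set"
    and p :: "(nat set \<times> nat set \<Rightarrow> complex) \<Rightarrow> (nat set \<times> nat set \<Rightarrow> complex)"
  assumes "n = 2 * m"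
    and "1 \<le> i" and "i \<le> m - 1"
    and "cartan_component n (n - 2 * i - 1) C"
    and "equiv_proj n (n - 2 * i - 1) C p"
  shows "p (psi n m i) = (\<lambda>_. 0)"
proof -
  define r where "r = 2 * (m - i - 1)"
  define D where "D = (\<lambda>x. p (Emult n x)) ` Wsp n r False"
  have K: "n - 2 * i - 1 = Suc r" and Kn: "Suc r + 2 \<le> n" using assms(1-3) unfolding r_def by auto
  have ep: "equiv_proj n (Suc r) C p" and cc: "cartan_component n (Suc r) C" using assms(4,5) K by simp_all
  have psiD: "p (psi n m i) \<in> D" unfolding D_def psi_eq r_def using phi_Wsp by blast
  have "D = {\<lambda>_. 0} \<or> D = C"
    using cc image_submodule[OF ep] unfolding cartan_component_def irred_hw_submodule_def D_def by blast
  moreover have "D \<noteq> C"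
  proof
    assume "D = C"
    then obtain x where "x \<in> Wsp n r False"
      and "hw_vector n (\<lambda>j. omegaD n (n - 1) j + omegaD n (Suc r) j) (p (Emult n x))"
      using cc unfolding cartan_component_def irred_hw_submodule_def D_def by auto
    then show False using no_hw_in_image[OF ep Kn] by blast
  qed
  ultimately show ?thesis using psiD by auto
qed

end
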